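(* For disjunctive guarded systems of type $(A,B)$, considering only runs that are strong-fair or finite: for all $n\ge|B|+1$, if $(A,B)^{(1,n)}$ has a deadlocked run that is strong-fair or finite, then $(A,B)^{(1,n+1)}$ has a deadlocked run that is strong-fair or finite.
   Context: A process template is $U=(Q_U,\mathit{init}_U,\Sigma_U,\delta_U)$ with finite states $Q_U$, initial state $\mathit{init}_U$, finite input alphabet $\Sigma_U$ and guarded transitions $\delta_U\subseteq Q_U\times\Sigma_U\times 2^{Q_A\cup Q_B}\times Q_U$; templates $A,B$ have disjoint state sets and disjoint alphabets, and $|B|=|Q_B|$. The system $(A,B)^{(1,n)}$ consists of one copy of $A$ and $n$ copies $B_1,\dots,B_n$ of $B$; a global state $s$ gives each process a local state, a global input $e$ gives each process an input letter, and initially all processes are in their initial states. In a disjunctive system a guard $g$ is satisfied for process $p$ in $s$ iff some process $p'\ne p$ has $s(p')\in g$. A local transition $(q,\sigma,g,q')$ of $p$ is enabled for $(s,e)$ if $s(p)=q$, $e(p)=\sigma$ and $g$ is satisfied for $p$ in $s$; a process is enabled if one of its transitions is; a global step changes the state of exactly one process along an enabled transition. A path is a sequence of configurations $(s_1,e_1,p_1),(s_2,e_2,p_2),\dots$ where $p_t$ makes the step from $s_t$ to $s_{t+1}$ under $e_t$, a configuration $(s,e,\bot)$ occurs (as the last one) exactly when all processes are disabled, and $e_{t+1}(p)=e_t(p)$ for every process $p$ not moving at moment $t$. A run is a maximal path from the initial state. A run is globally deadlocked if it is finite; an infinite run is locally deadlocked if some process is disabled at all moments from some moment on; a run is deadlocked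 if it is globally or locally deadlocked. A run is strong-fair if it is infinite and every process that is enabled infinitely often moves infinitely often. *)

theory Defs
  imports Main "HOL-Library.Extended_Nat"
begin

text \<open>Process templates: states, initial state, input alphabet, guarded transitions
  (q, sigma, g, q').\<close>
record ('q, 'a) template =
  states :: "'q set"
  init   :: 'q
  alpha  :: "'a set"
  trans  :: "('q \<times> 'a \<times> 'q set \<times> 'q) set"

definition wf_template :: "('q, 'a) template \<Rightarrow> 'q set \<Rightarrow> bool" where
  "wf_template U G \<longleftrightarrow> finite (states U) \<and> init U \<in> states U \<and> finite (alpha U) \<and>
     trans U \<subseteq> states U \<times> alpha U \<times> Pow G \<times> states U"

definition tmpl :: "('q, 'a) template \<Rightarrow> ('q, 'a) template \<Rightarrow> nat \<Rightarrow> ('q, 'a) template" where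
  "tmpl A B p = (if p = 0 then A else B)"

definition procs :: "nat \<Rightarrow> nat set" where
  "procs n = {0..n}"

definition guard_sat :: "nat \<Rightarrow> (nat \<Rightarrow> 'q) \<Rightarrow> nat \<Rightarrow> 'q set \<Rightarrow> bool" where
  "guard_sat n s p g \<longleftrightarrow> (\<exists>p'\<in>procs n. p' \<noteq> p \<and> s p' \<in> g)"

definition enabled_trans ::
  "('q, 'a) template \<Rightarrow> ('q, 'a) template \<Rightarrow> nat \<Rightarrow> (nat \<Rightarrow> 'q) \<Rightarrow> (nat \<Rightarrow> 'a) \<Rightarrow> nat
    \<Rightarrow> ('q \<times> 'a \<times> 'q set \<times> 'q) \<Rightarrow> bool" where
  "enabled_trans A B n s e p tr \<longleftrightarrow>
     (case tr of (q, \<sigma>, g, q') \<Rightarrow>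
        tr \<in> trans (tmpl A B p) \<and> s p = q \<and> e p = \<sigma> \<and> guard_sat n s p g)"

definition enabled ::
  "('q, 'a) template \<Rightarrow> ('q, 'a) template \<Rightarrow> nat \<Rightarrow> (nat \<Rightarrow> 'q) \<Rightarrow> (nat \<Rightarrow> 'a) \<Rightarrow> nat \<Rightarrow> bool" where
  "enabled A B n s e p \<longleftrightarrow> (\<exists>tr. enabled_trans A B n s e p tr)"

text \<open>A configuration is (global state, global input, moving process or None = bottom).\<close>
type_synonym ('q, 'a) config = "(nat \<Rightarrow> 'q) \<times> (nat \<Rightarrow> 'a) \<times> nat option"

definition st :: "('q, 'a) config \<Rightarrow> nat \<Rightarrow> 'q" where "st c = fst c"
definition inp :: "('q, 'a) config \<Rightarrow> nat \<Rightarrow> 'a" where "inp c = fst (snd c)"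
definition mv :: "('q, 'a) config \<Rightarrow> nat option" where "mv c = snd (snd c)"

text \<open>Finite runs end exactly with a bottom configuration,
  which occurs exactly when all processes are disabled; hence runs are maximal paths.\<close>
definition is_run ::
  "('q, 'a) template \<Rightarrow> ('q, 'a) template \<Rightarrow> nat \<Rightarrow> (nat \<Rightarrow> ('q, 'a) config) \<Rightarrow> enat \<Rightarrow> bool" where
  "is_run A B n \<rho> L \<longleftrightarrow>
     0 < L \<and>
     (\<forall>p\<in>procs n. st (\<rho> 0) p = init (tmpl A B p)) \<and>
     (\<forall>t. enat t < L \<longrightarrow>
        (\<forall>p\<in>procs n. st (\<rho> t) p \<in> states (tmpl A B p) \<and> inp (\<rho> t) p \<in> alpha (tmpl A B p)) \<and>
        (mv (\<rho> t) = None \<longleftrightarrow> (\<forall>p\<in>procs n. \<not> enabled A B n (st (\<rho> t)) (inp (\<rho> t)) p)) \<and>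
        (mv (\<rho> t) = None \<longrightarrow> L = enat (Suc t)) \<and>
        (mv (\<rho> t) \<noteq> None \<longrightarrow> enat (Suc t) < L) \<and>
        (enat (Suc t) < L \<longrightarrow>
           (\<exists>p tr. mv (\<rho> t) = Some p \<and> p \<in> procs n \<and>
              enabled_trans A B n (st (\<rho> t)) (inp (\<rho> t)) p tr \<and>
              st (\<rho> (Suc t)) = (st (\<rho> t))(p := snd (snd (snd tr))) \<and>
              (\<forall>p'. p' \<noteq> p \<longrightarrow> inp (\<rho> (Suc t)) p' = inp (\<rho> t) p'))))"

definition globally_deadlocked :: "enat \<Rightarrow> bool" where
  "globally_deadlocked L \<longleftrightarrow> L \<noteq> \<infinity>"

definition locally_deadlocked ::
  "('q, 'a) template \<Rightarrow> ('q, 'a) template \<Rightarrow> nat \<Rightarrow> (nat \<Rightarrow> ('q, 'a) config) \<Rightarrow> enat \<Rightarrow> bool" where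
  "locally_deadlocked A B n \<rho> L \<longleftrightarrow> L = \<infinity> \<and>
     (\<exists>p\<in>procs n. \<exists>t0. \<forall>t\<ge>t0. \<not> enabled A B n (st (\<rho> t)) (inp (\<rho> t)) p)"

definition deadlocked ::
  "('q, 'a) template \<Rightarrow> ('q, 'a) template \<Rightarrow> nat \<Rightarrow> (nat \<Rightarrow> ('q, 'a) config) \<Rightarrow> enat \<Rightarrow> bool" where
  "deadlocked A B n \<rho> L \<longleftrightarrow> globally_deadlocked L \<or> locally_deadlocked A B n \<rho> L"

definition strong_fair ::
  "('q, 'a) template \<Rightarrow> ('q, 'a) template \<Rightarrow> nat \<Rightarrow> (nat \<Rightarrow> ('q, 'a) config) \<Rightarrow> enat \<Rightarrow> bool" where
  "strong_fair A B n \<rho> L \<longleftrightarrow> L = \<infinity> \<and>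
     (\<forall>p\<in>procs n.
        (\<forall>t0. \<exists>t\<ge>t0. enabled A B n (st (\<rho> t)) (inp (\<rho> t)) p) \<longrightarrow>
        (\<forall>t0. \<exists>t\<ge>t0. mv (\<rho> t) = Some p))"

definition has_fair_or_finite_deadlock ::
  "('q, 'a) template \<Rightarrow> ('q, 'a) template \<Rightarrow> nat \<Rightarrow> bool" where
  "has_fair_or_finite_deadlock A B n \<longleftrightarrow>
     (\<exists>\<rho> L. is_run A B n \<rho> L \<and> deadlocked A B n \<rho> L \<and>
            (strong_fair A B n \<rho> L \<or> L \<noteq> \<infinity>))"

end

theory Submission
  imports Defs
begin

text \<open>Let \<open>\<rho>\<close> be a deadlocked run with \<open>n\<close> copies of \<open>B\<close>, and \<open>i\<close> one of them. The new process
  \<open>n + 1\<close> shadows \<open>i\<close>: it starts in the same state, and right after each transition of \<open>i\<close> it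
  takes the very same transition, whose guard is still witnessed because nobody else has moved in
  between. As the copy sits in a state of \<open>i\<close>, it is a new guard witness only for \<open>i\<close> itself, and
  it is enabled only when \<open>i\<close> would be enabled given one more witness in its own state; both are
  harmless when \<open>i\<close> has a twin, another process in the same state. As \<open>n > card (states B)\<close>,
  twins exist by pigeonhole: for a finite run in the final configuration; for an infinite run either
  some \<open>B\<close>-process moves infinitely often (take it as \<open>i\<close>: then the copy moves infinitely often,
  too) or all \<open>B\<close>-processes eventually rest, two of them in the same state. Processes eventually
  disabled in \<open>\<rho>\<close> stay eventually disabled in the extended run, so both the deadlock and strong
  fairness carry over.\<close>

abbreviation enabled_in ::
  "('q, 'a) template \<Rightarrow> ('q, 'a) template \<Rightarrow> nat \<Rightarrow> ('q, 'a) config \<Rightarrow> nat \<Rightarrow> bool" where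
  "enabled_in A B n c p \<equiv> enabled A B n (st c) (inp c) p"

definition has_twin :: "nat \<Rightarrow> (nat \<Rightarrow> 'q) \<Rightarrow> nat \<Rightarrow> bool" where
  "has_twin n s i \<longleftrightarrow> (\<exists>j\<in>procs n. j \<noteq> i \<and> s j = s i)"

lemma procs_Suc: "procs (Suc n) = insert (Suc n) (procs n)"
  by (auto simp: procs_def)

lemma Suc_notin_procs [simp]: "Suc n \<notin> procs n"
  by (simp add: procs_def)

lemma tmpl_Suc [simp]: "tmpl A B (Suc p) = B"
  by (simp add: tmpl_def)

lemma enabled_trans_iff:
  "enabled_trans A B n s e p tr \<longleftrightarrow>
     tr \<in> trans (tmpl A B p) \<and> s p = fst tr \<and> e p = fst (snd tr) \<and>
     guard_sat n s p (fst (snd (snd tr)))"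
  by (cases tr) (simp add: enabled_trans_def)

lemma guard_sat_fun_upd_Suc:
  "guard_sat (Suc n) (s(Suc n := x)) p g \<longleftrightarrow> guard_sat n s p g \<or> (p \<noteq> Suc n \<and> x \<in> g)"
  by (auto simp: guard_sat_def procs_Suc)

lemma guard_sat_outsider:
  "k \<notin> procs n \<Longrightarrow> guard_sat n s k g \<longleftrightarrow> (\<exists>p\<in>procs n. s p \<in> g)"
  by (auto simp: guard_sat_def)

lemma guard_sat_twin:
  "has_twin n s i \<Longrightarrow> guard_sat n s i g \<longleftrightarrow> (\<exists>p\<in>procs n. s p \<in> g)"
  unfolding guard_sat_def has_twin_def by (metis (mono_tags))

lemma guard_sat_copy:
  assumes "j \<in> procs n" "j \<noteq> p" "s j = s i"
  shows "guard_sat (Suc n) (s(Suc n := s i)) p g \<longleftrightarrow> guard_sat n s p g"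
  using assms by (auto simp: guard_sat_def procs_Suc)

lemma enabled_trans_fun_upd_Suc:
  assumes "p \<in> procs n" "enabled_trans A B n s e p tr"
  shows "enabled_trans A B (Suc n) (s(Suc n := x)) (e(Suc n := y)) p tr"
proof -
  have "p \<noteq> Suc n" using assms(1) by auto
  then show ?thesis using assms(2) by (simp add: enabled_trans_iff guard_sat_fun_upd_Suc)
qed

lemma enabled_fun_upd_Suc:
  "p \<in> procs n \<Longrightarrow> enabled A B n s e p \<Longrightarrow> enabled A B (Suc n) (s(Suc n := x)) (e(Suc n := y)) p"
  unfolding enabled_def by (metis enabled_trans_fun_upd_Suc)

lemma enabled_copy_iff:
  assumes "p \<in> procs n" "j \<in> procs n" "j \<noteq> p" "s j = s i"
  shows "enabled A B (Suc n) (s(Suc n := s i)) (e(Suc n := y)) p \<longleftrightarrow> enabled A B n s e p"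
proof -
  have "p \<noteq> Suc n" using assms(1) by auto
  then show ?thesis
    using guard_sat_copy[OF assms(2-4)] by (simp add: enabled_def enabled_trans_iff)
qed

lemma enabled_copy_process_iff:
  assumes "i \<in> {1..n}" "has_twin n s i"
  shows "enabled A B (Suc n) (s(Suc n := s i)) (e(Suc n := e i)) (Suc n) \<longleftrightarrow> enabled A B n s e i"
proof -
  have "tmpl A B i = B" using assms(1) by (simp add: tmpl_def)
  then show ?thesis
    using assms(2) by (simp add: enabled_def enabled_trans_iff guard_sat_fun_upd_Suc
        guard_sat_outsider guard_sat_twin)
qed

lemma enabled_stale_copy_imp:
  assumes "p \<in> procs n" "i \<in> procs n" "p \<noteq> i" "s p = s0 p" "e p = e0 p"
    and "enabled A B (Suc n) (s(Suc n := s0 i)) (e(Suc n := y)) p"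
  shows "enabled A B n s e p \<or> enabled A B n s0 e0 p"
proof -
  have "p \<noteq> Suc n" using assms(1) by auto
  moreover have "s0 i \<in> g \<Longrightarrow> guard_sat n s0 p g" for g
    using assms(2,3) by (auto simp: guard_sat_def)
  ultimately show ?thesis
    using assms(4-6) by (auto simp: enabled_def enabled_trans_iff guard_sat_fun_upd_Suc)
qed

lemma enabled_trans_replay:
  assumes "i \<in> {1..n}" "enabled_trans A B n s0 e0 i tr" "\<And>p. p \<noteq> i \<Longrightarrow> s p = s0 p"
  shows "enabled_trans A B (Suc n) (s(Suc n := s0 i)) (e(Suc n := e0 i)) (Suc n) tr"
proof -
  have "tmpl A B i = B" using assms(1) by (simp add: tmpl_def)
  moreover have "guard_sat n s (Suc n) g" if "guard_sat n s0 i g" for g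
  proof -
    from that obtain p where "p \<in> procs n" "p \<noteq> i" "s0 p \<in> g"
      by (auto simp: guard_sat_def)
    then show ?thesis using assms(3) guard_sat_outsider[OF Suc_notin_procs] by metis
  qed
  ultimately show ?thesis
    using assms(2) by (simp add: enabled_trans_iff guard_sat_fun_upd_Suc)
qed

definition valid_config ::
  "('q, 'a) template \<Rightarrow> ('q, 'a) template \<Rightarrow> nat \<Rightarrow> ('q, 'a) config \<Rightarrow> bool" where
  "valid_config A B n c \<longleftrightarrow>
     (\<forall>p\<in>procs n. st c p \<in> states (tmpl A B p) \<and> inp c p \<in> alpha (tmpl A B p))"

definition moves_to ::
  "('q, 'a) template \<Rightarrow> ('q, 'a) template \<Rightarrow> nat \<Rightarrow> ('q, 'a) config \<Rightarrow> nat \<Rightarrow> ('q, 'a) config \<Rightarrow> bool" where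
  "moves_to A B n c p c' \<longleftrightarrow> (\<exists>tr. enabled_trans A B n (st c) (inp c) p tr \<and>
     st c' = (st c)(p := snd (snd (snd tr))) \<and> (\<forall>p'. p' \<noteq> p \<longrightarrow> inp c' p' = inp c p'))"

definition run_step ::
  "('q, 'a) template \<Rightarrow> ('q, 'a) template \<Rightarrow> nat \<Rightarrow> (nat \<Rightarrow> ('q, 'a) config) \<Rightarrow> enat \<Rightarrow> nat \<Rightarrow> bool" where
  "run_step A B n \<rho> L t \<longleftrightarrow>
     valid_config A B n (\<rho> t) \<and>
     (mv (\<rho> t) = None \<longleftrightarrow> (\<forall>p\<in>procs n. \<not> enabled_in A B n (\<rho> t) p)) \<and>
     (mv (\<rho> t) = None \<longrightarrow> L = enat (Suc t)) \<and>
     (mv (\<rho> t) \<noteq> None \<longrightarrow> enat (Suc t) < L) \<and>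
     (enat (Suc t) < L \<longrightarrow>
        (\<exists>p\<in>procs n. mv (\<rho> t) = Some p \<and> moves_to A B n (\<rho> t) p (\<rho> (Suc t))))"

lemma is_run_iff:
  "is_run A B n \<rho> L \<longleftrightarrow> 0 < L \<and> (\<forall>p\<in>procs n. st (\<rho> 0) p = init (tmpl A B p)) \<and>
     (\<forall>t. enat t < L \<longrightarrow> run_step A B n \<rho> L t)"
  unfolding is_run_def run_step_def valid_config_def moves_to_def by blast

lemma strong_fair_iff:
  "strong_fair A B n \<rho> L \<longleftrightarrow> L = \<infinity> \<and>
     (\<forall>p\<in>procs n. (\<exists>\<^sub>F t in sequentially. mv (\<rho> t) = Some p) \<or>
                  (\<forall>\<^sub>F t in sequentially. \<not> enabled_in A B n (\<rho> t) p))"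
  unfolding strong_fair_def frequently_sequentially[symmetric] not_frequently[symmetric] by blast

lemma locally_deadlocked_iff:
  "locally_deadlocked A B n \<rho> L \<longleftrightarrow>
     L = \<infinity> \<and> (\<exists>p\<in>procs n. \<forall>\<^sub>F t in sequentially. \<not> enabled_in A B n (\<rho> t) p)"
  by (simp add: locally_deadlocked_def eventually_sequentially)

lemma moves_to_enabled: "moves_to A B n c p c' \<Longrightarrow> enabled_in A B n c p"
  unfolding moves_to_def enabled_def by blast

lemma moves_to_frame: "moves_to A B n c p c' \<Longrightarrow> q \<noteq> p \<Longrightarrow> st c' q = st c q"
  unfolding moves_to_def by auto

lemma moves_to_inp_frame: "moves_to A B n c p c' \<Longrightarrow> q \<noteq> p \<Longrightarrow> inp c' q = inp c q"
  unfolding moves_to_def by auto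

lemma valid_config_copy:
  assumes "i \<in> {1..n}" "valid_config A B n c" "valid_config A B n c0"
  shows "valid_config A B (Suc n) ((st c)(Suc n := st c0 i), (inp c)(Suc n := inp c0 i), m)"
proof -
  have "i \<in> procs n" "tmpl A B i = B" using assms(1) by (auto simp: procs_def tmpl_def)
  then show ?thesis
    using assms(2,3) by (auto simp: valid_config_def procs_Suc st_def inp_def)
qed

context
  fixes A B n \<rho> L
  assumes run: "is_run A B n \<rho> L"
begin

lemma run_initial: "p \<in> procs n \<Longrightarrow> st (\<rho> 0) p = init (tmpl A B p)"
  using run by (simp add: is_run_iff)

lemma run_step_of_run: "enat t < L \<Longrightarrow> run_step A B n \<rho> L t"
  using run by (simp add: is_run_iff)

lemma run_valid: "enat t < L \<Longrightarrow> valid_config A B n (\<rho> t)"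
  using run_step_of_run by (simp add: run_step_def)

lemma run_None_iff:
  "enat t < L \<Longrightarrow> mv (\<rho> t) = None \<longleftrightarrow> (\<forall>p\<in>procs n. \<not> enabled_in A B n (\<rho> t) p)"
  using run_step_of_run by (simp add: run_step_def)

lemma run_None_length: "enat t < L \<Longrightarrow> mv (\<rho> t) = None \<Longrightarrow> L = enat (Suc t)"
  using run_step_of_run by (simp add: run_step_def)

lemma run_Some:
  assumes "enat t < L" "mv (\<rho> t) = Some p"
  shows "p \<in> procs n \<and> enat (Suc t) < L \<and> moves_to A B n (\<rho> t) p (\<rho> (Suc t))"
  using run_step_of_run[OF assms(1)] assms(2) by (auto simp: run_step_def)

lemma run_moves_enabled: "enat t < L \<Longrightarrow> mv (\<rho> t) = Some p \<Longrightarrow> enabled_in A B n (\<rho> t) p"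
  using run_Some moves_to_enabled by blast

lemma run_infinite_Some: "L = \<infinity> \<Longrightarrow> \<exists>p. mv (\<rho> t) = Some p"
  using run_None_length by fastforce

end

lemma pigeonhole_twins:
  assumes "finite S" "card S < n" "\<forall>p\<in>{1..n}. s p \<in> S"
  shows "\<exists>i\<in>{1..n}. \<exists>j\<in>{1..n}. i \<noteq> j \<and> s j = s i"
proof -
  have "card (s ` {1..n}) \<le> card S"
    using assms(3) by (intro card_mono[OF assms(1)]) blast
  then have "card (s ` {1..n}) < card {1..n}" using assms(2) by simp
  then have "\<not> inj_on s {1..n}" by (rule pigeonhole)
  then show ?thesis unfolding inj_on_def by (metis (full_types))
qed

lemma run_st_in_states_B:
  assumes "is_run A B n \<rho> L" "enat t < L" "p \<in> {1..n}"
  shows "st (\<rho> t) p \<in> states B"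
proof -
  have "p \<in> procs n" "tmpl A B p = B" using assms(3) by (auto simp: procs_def tmpl_def)
  then show ?thesis using run_valid[OF assms(1,2)] by (auto simp: valid_config_def)
qed

lemma run_st_constant:
  assumes run: "is_run A B n \<rho> \<infinity>" and still: "\<forall>t\<ge>t1. mv (\<rho> t) \<noteq> Some p" and "t \<ge> t1"
  shows "st (\<rho> t) p = st (\<rho> t1) p"
  using \<open>t \<ge> t1\<close>
proof (induction t rule: dec_induct)
  case (step t)
  obtain q where "mv (\<rho> t) = Some q" using run_infinite_Some[OF run] by blast
  moreover have "q \<noteq> p" using still step.hyps calculation by auto
  ultimately show ?case
    using run_Some[OF run, of t q] moves_to_frame[of A B n "\<rho> t" q "\<rho> (Suc t)" p] step.IH by simp
qed simp

lemma finite_run_ex_twin: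
  assumes run: "is_run A B n \<rho> (enat m)" and "finite (states B)" "card (states B) < n"
  shows "\<exists>i\<in>{1..n}. has_twin n (st (\<rho> (m - 1))) i"
proof -
  have "enat (m - 1) < enat m" using run by (cases m) (auto simp: is_run_iff zero_enat_def)
  then have "\<forall>p\<in>{1..n}. st (\<rho> (m - 1)) p \<in> states B" using run_st_in_states_B[OF run] by blast
  then obtain i j where ij: "i \<in> {1..n}" "j \<in> {1..n}" "i \<noteq> j"
      "st (\<rho> (m - 1)) j = st (\<rho> (m - 1)) i"
    using pigeonhole_twins[OF assms(2,3)] by blast
  then have "has_twin n (st (\<rho> (m - 1))) i"
    unfolding has_twin_def by (intro bexI[of _ j]) (auto simp: procs_def)
  then show ?thesis using ij(1) by blast
qed

lemma infinite_run_ex_copyable: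
  assumes run: "is_run A B n \<rho> \<infinity>" and "finite (states B)" "card (states B) < n"
  shows "\<exists>i\<in>{1..n}. (\<exists>\<^sub>F t in sequentially. mv (\<rho> t) = Some i) \<or>
           (\<forall>\<^sub>F t in sequentially. has_twin n (st (\<rho> t)) i)"
proof (cases "\<exists>i\<in>{1..n}. \<exists>\<^sub>F t in sequentially. mv (\<rho> t) = Some i")
  case False
  then have "\<forall>p\<in>{1..n}. \<forall>\<^sub>F t in sequentially. mv (\<rho> t) \<noteq> Some p"
    by (simp add: not_frequently)
  then have "\<forall>\<^sub>F t in sequentially. \<forall>p\<in>{1..n}. mv (\<rho> t) \<noteq> Some p"
    by (simp add: eventually_ball_finite)
  then obtain t1 where still: "\<forall>t\<ge>t1. \<forall>p\<in>{1..n}. mv (\<rho> t) \<noteq> Some p"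
    unfolding eventually_sequentially by blast
  have "\<forall>p\<in>{1..n}. st (\<rho> t1) p \<in> states B" using run_st_in_states_B[OF run] by simp
  then obtain i j where ij: "i \<in> {1..n}" "j \<in> {1..n}" "i \<noteq> j" "st (\<rho> t1) j = st (\<rho> t1) i"
    using pigeonhole_twins[OF assms(2,3)] by blast
  have "has_twin n (st (\<rho> t)) i" if "t \<ge> t1" for t
  proof -
    have "st (\<rho> t) p = st (\<rho> t1) p" if "p \<in> {1..n}" for p
      using run_st_constant[OF run _ \<open>t \<ge> t1\<close>] still that by blast
    then have "j \<in> procs n" "j \<noteq> i" "st (\<rho> t) j = st (\<rho> t) i"
      using ij by (auto simp: procs_def)
    then show ?thesis unfolding has_twin_def by blast
  qed
  then show ?thesis using ij(1) unfolding eventually_sequentially by blast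
qed auto

locale process_copy =
  fixes A B :: "('q, 'a) template" and n :: nat and \<rho> :: "nat \<Rightarrow> ('q, 'a) config"
    and L :: enat and i :: nat
  assumes run: "is_run A B n \<rho> L" and i: "i \<in> {1..n}"
begin

fun moves_before :: "nat \<Rightarrow> nat" where
  "moves_before 0 = 0"
| "moves_before (Suc t) = moves_before t + (if mv (\<rho> t) = Some i then 1 else 0)"

definition tick :: "nat \<Rightarrow> nat" where
  "tick t = t + moves_before t"

text \<open>Configuration \<open>\<rho> t\<close> is replayed at time \<open>tick t\<close> of the extended run; when \<open>i\<close> moves at
  \<open>t\<close>, time \<open>Suc (tick t)\<close> is the catch-up move of the copy. \<open>slot\<close> inverts this: \<open>slot u = (t, b)\<close>
  with \<open>b\<close> telling whether \<open>u\<close> is a catch-up time.\<close>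

fun slot :: "nat \<Rightarrow> nat \<times> bool" where
  "slot 0 = (0, False)"
| "slot (Suc u) = (case slot u of (t, b) \<Rightarrow>
     if \<not> b \<and> mv (\<rho> t) = Some i then (t, True) else (Suc t, False))"

definition synced :: "nat \<Rightarrow> ('q, 'a) config" where
  "synced t = ((st (\<rho> t))(Suc n := st (\<rho> t) i), (inp (\<rho> t))(Suc n := inp (\<rho> t) i), mv (\<rho> t))"

definition catching_up :: "nat \<Rightarrow> ('q, 'a) config" where
  "catching_up t = ((st (\<rho> (Suc t)))(Suc n := st (\<rho> t) i),
     (inp (\<rho> (Suc t)))(Suc n := inp (\<rho> t) i), Some (Suc n))"

definition copy_run :: "nat \<Rightarrow> ('q, 'a) config" where
  "copy_run u = (case slot u of (t, b) \<Rightarrow> if b then catching_up t else synced t)"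

definition copy_len :: enat where
  "copy_len = (case L of enat m \<Rightarrow> enat (tick m) | \<infinity> \<Rightarrow> \<infinity>)"

lemma i_procs: "i \<in> procs n"
  using i by (simp add: procs_def)

lemma synced_simps [simp]:
  "st (synced t) = (st (\<rho> t))(Suc n := st (\<rho> t) i)"
  "inp (synced t) = (inp (\<rho> t))(Suc n := inp (\<rho> t) i)"
  "mv (synced t) = mv (\<rho> t)"
  by (simp_all add: synced_def st_def inp_def mv_def)

lemma catching_up_simps [simp]:
  "st (catching_up t) = (st (\<rho> (Suc t)))(Suc n := st (\<rho> t) i)"
  "inp (catching_up t) = (inp (\<rho> (Suc t)))(Suc n := inp (\<rho> t) i)"
  "mv (catching_up t) = Some (Suc n)"
  by (simp_all add: catching_up_def st_def inp_def mv_def)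

lemma tick_Suc: "tick (Suc t) = Suc (tick t) + (if mv (\<rho> t) = Some i then 1 else 0)"
  by (simp add: tick_def)

lemma tick_0 [simp]: "tick 0 = 0"
  by (simp add: tick_def)

lemma strict_mono_tick: "strict_mono tick"
  unfolding strict_mono_Suc_iff by (simp add: tick_Suc)

lemma tick_less_iff [simp]: "tick t < tick t' \<longleftrightarrow> t < t'"
  using strict_mono_tick strict_mono_less by blast

lemma tick_le_iff [simp]: "tick t \<le> tick t' \<longleftrightarrow> t \<le> t'"
  using strict_mono_tick strict_mono_less_eq by blast

lemma le_tick: "t \<le> tick t"
  by (simp add: tick_def)

lemma slot_tick: "slot (tick t) = (t, False)"
  by (induction t) (simp_all add: tick_Suc)

lemma copy_run_tick [simp]: "copy_run (tick t) = synced t"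
  by (simp add: copy_run_def slot_tick)

lemma copy_run_Suc_tick: "mv (\<rho> t) = Some i \<Longrightarrow> copy_run (Suc (tick t)) = catching_up t"
  by (simp add: copy_run_def slot_tick)

lemma copy_run_Suc_tick_other: "mv (\<rho> t) \<noteq> Some i \<Longrightarrow> copy_run (Suc (tick t)) = synced (Suc t)"
  using copy_run_tick[of "Suc t"] by (simp add: tick_Suc)

lemma tick_cases:
  obtains t where "u = tick t"
  | t where "u = Suc (tick t)" "mv (\<rho> t) = Some i"
proof (induction u arbitrary: thesis)
  case 0
  then show ?case using tick_0 by metis
next
  case (Suc u)
  show ?case
  proof (rule Suc.IH)
    fix t assume "u = tick t"
    show thesis
    proof (cases "mv (\<rho> t) = Some i")
      case True
      then show ?thesis using Suc.prems(2) \<open>u = tick t\<close> by blast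
    next
      case False
      then have "Suc u = tick (Suc t)" using \<open>u = tick t\<close> by (simp add: tick_Suc)
      then show ?thesis using Suc.prems(1) by blast
    qed
  next
    fix t assume "u = Suc (tick t)" "mv (\<rho> t) = Some i"
    then show thesis using Suc.prems(1)[of "Suc t"] by (simp add: tick_Suc)
  qed
qed

lemma copy_len_enat: "L = enat m \<Longrightarrow> copy_len = enat (tick m)"
  unfolding copy_len_def by simp

lemma copy_len_infinite: "L = \<infinity> \<Longrightarrow> copy_len = \<infinity>"
  unfolding copy_len_def by simp

lemma tick_less_copy_len: "enat (tick t) < copy_len \<longleftrightarrow> enat t < L"
  unfolding copy_len_def by (cases L) simp_all

lemma Suc_tick_less_copy_len:
  assumes "mv (\<rho> t) = Some i"
  shows "enat (Suc (tick t)) < copy_len \<longleftrightarrow> enat t < L"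
proof
  assume "enat (Suc (tick t)) < copy_len"
  then have "enat (tick t) < copy_len" by (meson Suc_ile_eq order_less_imp_le)
  then show "enat t < L" by (simp add: tick_less_copy_len)
next
  assume "enat t < L"
  then have "enat (tick (Suc t)) < copy_len"
    using run_Some[OF run _ assms] by (simp add: tick_less_copy_len)
  moreover have "Suc (tick t) < tick (Suc t)"
    using assms by (simp add: tick_Suc)
  ultimately show "enat (Suc (tick t)) < copy_len"
    using enat_ord_simps(2) order.strict_trans by blast
qed

lemma enabled_synced_iff:
  assumes "p \<in> procs n" "p = i \<Longrightarrow> has_twin n (st (\<rho> t)) i"
  shows "enabled_in A B (Suc n) (synced t) p \<longleftrightarrow> enabled_in A B n (\<rho> t) p"
proof -
  obtain j where "j \<in> procs n" "j \<noteq> p" "st (\<rho> t) j = st (\<rho> t) i"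
    using assms i_procs unfolding has_twin_def by (cases "p = i") auto
  then show ?thesis using enabled_copy_iff[OF assms(1)] by simp
qed

lemma enabled_synced_copy_iff:
  "has_twin n (st (\<rho> t)) i \<Longrightarrow>
     enabled_in A B (Suc n) (synced t) (Suc n) \<longleftrightarrow> enabled_in A B n (\<rho> t) i"
  using enabled_copy_process_iff[OF i] by simp

lemma synced_disabled_iff:
  assumes "enat t < L" "mv (\<rho> t) = None \<Longrightarrow> has_twin n (st (\<rho> t)) i"
  shows "mv (synced t) = None \<longleftrightarrow> (\<forall>p\<in>procs (Suc n). \<not> enabled_in A B (Suc n) (synced t) p)"
proof
  assume "mv (synced t) = None"
  then have "has_twin n (st (\<rho> t)) i" "\<forall>p\<in>procs n. \<not> enabled_in A B n (\<rho> t) p"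
    using assms run_None_iff[OF run] by auto
  then show "\<forall>p\<in>procs (Suc n). \<not> enabled_in A B (Suc n) (synced t) p"
    using enabled_synced_iff enabled_synced_copy_iff i_procs by (auto simp: procs_Suc)
next
  assume disabled: "\<forall>p\<in>procs (Suc n). \<not> enabled_in A B (Suc n) (synced t) p"
  show "mv (synced t) = None"
  proof (rule ccontr)
    assume "mv (synced t) \<noteq> None"
    then obtain p where "mv (\<rho> t) = Some p" by auto
    then have "p \<in> procs n" "enabled_in A B n (\<rho> t) p"
      using run_Some[OF run assms(1)] moves_to_enabled by blast+
    then show False
      using disabled enabled_fun_upd_Suc by (fastforce simp: procs_Suc)
  qed
qed

lemma synced_moves_to:
  assumes "enat t < L" "mv (\<rho> t) = Some p"
  shows "moves_to A B (Suc n) (synced t) p (copy_run (Suc (tick t)))"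
proof -
  obtain tr where p: "p \<in> procs n" and tr: "enabled_trans A B n (st (\<rho> t)) (inp (\<rho> t)) p tr"
    and st_Suc: "st (\<rho> (Suc t)) = (st (\<rho> t))(p := snd (snd (snd tr)))"
    and inp_Suc: "\<forall>p'. p' \<noteq> p \<longrightarrow> inp (\<rho> (Suc t)) p' = inp (\<rho> t) p'"
    using run_Some[OF run assms] unfolding moves_to_def by blast
  have "p \<noteq> Suc n" using p by auto
  have "st (copy_run (Suc (tick t))) = (st (synced t))(p := snd (snd (snd tr))) \<and>
      (\<forall>p'. p' \<noteq> p \<longrightarrow> inp (copy_run (Suc (tick t))) p' = inp (synced t) p')"
  proof (cases "p = i")
    case True
    then show ?thesis
      using assms(2) st_Suc inp_Suc \<open>p \<noteq> Suc n\<close> by (auto simp: copy_run_Suc_tick fun_eq_iff)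
  next
    case False
    then show ?thesis
      using assms(2) st_Suc inp_Suc \<open>p \<noteq> Suc n\<close> by (auto simp: copy_run_Suc_tick_other fun_eq_iff)
  qed
  moreover have "enabled_trans A B (Suc n) (st (synced t)) (inp (synced t)) p tr"
    using enabled_trans_fun_upd_Suc[OF p tr] by simp
  ultimately show ?thesis unfolding moves_to_def by blast
qed

lemma catching_up_moves_to:
  assumes "enat t < L" "mv (\<rho> t) = Some i"
  shows "moves_to A B (Suc n) (catching_up t) (Suc n) (copy_run (Suc (Suc (tick t))))"
proof -
  obtain tr where tr: "enabled_trans A B n (st (\<rho> t)) (inp (\<rho> t)) i tr"
    and st_Suc: "st (\<rho> (Suc t)) = (st (\<rho> t))(i := snd (snd (snd tr)))"
    using run_Some[OF run assms] unfolding moves_to_def by blast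
  have "copy_run (Suc (Suc (tick t))) = synced (Suc t)"
    using assms(2) copy_run_tick[of "Suc t"] by (simp add: tick_Suc)
  then have "st (copy_run (Suc (Suc (tick t)))) = (st (catching_up t))(Suc n := snd (snd (snd tr)))"
    "\<forall>p'. p' \<noteq> Suc n \<longrightarrow> inp (copy_run (Suc (Suc (tick t)))) p' = inp (catching_up t) p'"
    using st_Suc by (auto simp: fun_eq_iff)
  moreover have "enabled_trans A B (Suc n) (st (catching_up t)) (inp (catching_up t)) (Suc n) tr"
    using enabled_trans_replay[OF i tr, of "st (\<rho> (Suc t))"] st_Suc by simp
  ultimately show ?thesis unfolding moves_to_def by blast
qed

lemma run_step_tick:
  assumes t: "enat t < L" and twin: "mv (\<rho> t) = None \<Longrightarrow> has_twin n (st (\<rho> t)) i"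
  shows "run_step A B (Suc n) copy_run copy_len (tick t)"
proof -
  have len_None: "copy_len = enat (Suc (tick t))" if "mv (\<rho> t) = None"
    using copy_len_enat[OF run_None_length[OF run t that]] that by (simp add: tick_Suc)
  have len_Some: "enat (Suc (tick t)) < copy_len" if "mv (\<rho> t) = Some p" for p
  proof -
    have "enat (tick (Suc t)) < copy_len"
      using run_Some[OF run t that] by (simp add: tick_less_copy_len)
    moreover have "Suc (tick t) \<le> tick (Suc t)" by (simp add: tick_Suc)
    ultimately show ?thesis by (meson enat_ord_simps(1) order.strict_trans1)
  qed
  have "valid_config A B (Suc n) (synced t)"
    using valid_config_copy[OF i run_valid[OF run t] run_valid[OF run t]] by (simp add: synced_def)
  moreover have "\<exists>p\<in>procs (Suc n). mv (synced t) = Some p \<and>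
      moves_to A B (Suc n) (synced t) p (copy_run (Suc (tick t)))"
    if "enat (Suc (tick t)) < copy_len"
    using that len_None synced_moves_to[OF t] run_Some[OF run t]
    by (cases "mv (\<rho> t)") (auto simp: procs_Suc)
  ultimately show ?thesis
    unfolding run_step_def copy_run_tick
    using synced_disabled_iff[OF t twin] len_None len_Some by auto
qed

lemma run_step_Suc_tick:
  assumes t: "enat t < L" and moves: "mv (\<rho> t) = Some i"
  shows "run_step A B (Suc n) copy_run copy_len (Suc (tick t))"
proof -
  have Suc_t: "enat (Suc t) < L" using run_Some[OF run t moves] by blast
  have "valid_config A B (Suc n) (catching_up t)"
    using valid_config_copy[OF i run_valid[OF run Suc_t] run_valid[OF run t]]
    by (simp add: catching_up_def)
  moreover have "enat (Suc (Suc (tick t))) < copy_len"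
    using Suc_t moves by (simp add: tick_less_copy_len[symmetric] tick_Suc)
  moreover have "moves_to A B (Suc n) (catching_up t) (Suc n) (copy_run (Suc (Suc (tick t))))"
    using catching_up_moves_to[OF t moves] .
  moreover have "Suc n \<in> procs (Suc n)" by (simp add: procs_def)
  ultimately show ?thesis
    unfolding run_step_def copy_run_Suc_tick[OF moves] using moves_to_enabled by fastforce
qed

lemma copy_run_is_run:
  assumes "\<And>t. enat t < L \<Longrightarrow> mv (\<rho> t) = None \<Longrightarrow> has_twin n (st (\<rho> t)) i"
  shows "is_run A B (Suc n) copy_run copy_len"
  unfolding is_run_iff
proof (intro conjI ballI allI impI)
  have "0 < L" using run by (simp add: is_run_iff)
  then show "0 < copy_len" using tick_less_copy_len[of 0] by (simp add: zero_enat_def)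
next
  fix p assume "p \<in> procs (Suc n)"
  then show "st (copy_run 0) p = init (tmpl A B p)"
    using run_initial[OF run] i_procs i copy_run_tick[of 0]
    by (auto simp: procs_Suc tmpl_def simp del: copy_run_tick)
next
  fix u assume u: "enat u < copy_len"
  show "run_step A B (Suc n) copy_run copy_len u"
  proof (cases u rule: tick_cases)
    case (1 t)
    then show ?thesis using u run_step_tick assms by (simp add: tick_less_copy_len)
  next
    case (2 t)
    then show ?thesis using u run_step_Suc_tick by (simp add: Suc_tick_less_copy_len)
  qed
qed

lemma eventually_copy_run:
  assumes "\<forall>\<^sub>F t in sequentially. P (synced t) \<and> (mv (\<rho> t) = Some i \<longrightarrow> P (catching_up t))"
  shows "\<forall>\<^sub>F u in sequentially. P (copy_run u)"
proof -
  obtain t0 where t0: "\<And>t. t \<ge> t0 \<Longrightarrow> P (synced t) \<and> (mv (\<rho> t) = Some i \<longrightarrow> P (catching_up t))"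
    using assms unfolding eventually_sequentially by blast
  have "P (copy_run u)" if "u \<ge> tick t0" for u
  proof (cases u rule: tick_cases)
    case (1 t)
    then show ?thesis using that t0 by simp
  next
    case (2 t)
    then have "tick t0 < tick (Suc t)" using that by (simp add: tick_Suc)
    then show ?thesis using 2 t0 by (simp add: copy_run_Suc_tick)
  qed
  then show ?thesis unfolding eventually_sequentially by blast
qed

lemma frequently_copy_run:
  assumes "\<exists>\<^sub>F t in sequentially. P (synced t)"
  shows "\<exists>\<^sub>F u in sequentially. P (copy_run u)"
  using assms le_tick unfolding frequently_sequentially by (metis copy_run_tick order.trans)

lemma frequently_catching_up:
  assumes "\<exists>\<^sub>F t in sequentially. mv (\<rho> t) = Some i \<and> P (catching_up t)"
  shows "\<exists>\<^sub>F u in sequentially. P (copy_run u)"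
  using assms le_tick unfolding frequently_sequentially
  by (metis copy_run_Suc_tick le_SucI order.trans)

lemma enabled_catching_up:
  assumes "enat t < L" "mv (\<rho> t) = Some i" "p \<in> procs n" "p \<noteq> i"
    and "enabled_in A B (Suc n) (catching_up t) p"
  shows "enabled_in A B n (\<rho> (Suc t)) p \<or> enabled_in A B n (\<rho> t) p"
proof -
  have "moves_to A B n (\<rho> t) i (\<rho> (Suc t))" using run_Some[OF run assms(1,2)] by blast
  then have "st (\<rho> (Suc t)) p = st (\<rho> t) p" "inp (\<rho> (Suc t)) p = inp (\<rho> t) p"
    using assms(4) moves_to_frame moves_to_inp_frame by metis+
  then show ?thesis using enabled_stale_copy_imp[OF assms(3) i_procs assms(4)] assms(5) by simp
qed

end

locale fair_process_copy = process_copy +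
  assumes infinite: "L = \<infinity>" and fair: "strong_fair A B n \<rho> L"
    and copyable: "(\<exists>\<^sub>F t in sequentially. mv (\<rho> t) = Some i) \<or>
      (\<forall>\<^sub>F t in sequentially. has_twin n (st (\<rho> t)) i)"
begin

lemma not_frequently_moves_imp_eventually_disabled:
  "p \<in> procs n \<Longrightarrow> \<not> (\<exists>\<^sub>F t in sequentially. mv (\<rho> t) = Some p) \<Longrightarrow>
     \<forall>\<^sub>F t in sequentially. \<not> enabled_in A B n (\<rho> t) p"
  using fair by (auto simp: strong_fair_iff)

lemma copy_run_eventually_disabled:
  assumes p: "p \<in> procs n" and rare: "\<not> (\<exists>\<^sub>F t in sequentially. mv (\<rho> t) = Some p)"
  shows "\<forall>\<^sub>F u in sequentially. \<not> enabled_in A B (Suc n) (copy_run u) p"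
proof (rule eventually_copy_run)
  have disabled: "\<forall>\<^sub>F t in sequentially. \<not> enabled_in A B n (\<rho> t) p"
    using not_frequently_moves_imp_eventually_disabled[OF p rare] .
  have "\<forall>\<^sub>F t in sequentially. p = i \<longrightarrow> mv (\<rho> t) \<noteq> Some i \<and> has_twin n (st (\<rho> t)) i"
  proof (cases "p = i")
    case True
    then have "\<not> (\<exists>\<^sub>F t in sequentially. mv (\<rho> t) = Some i)" using rare by simp
    then have "\<forall>\<^sub>F t in sequentially. mv (\<rho> t) \<noteq> Some i"
      and "\<forall>\<^sub>F t in sequentially. has_twin n (st (\<rho> t)) i"
      using copyable by (simp add: not_frequently, blast)
    then show ?thesis by eventually_elim simp
  qed simp
  moreover have "\<forall>\<^sub>F t in sequentially. \<not> enabled_in A B n (\<rho> (Suc t)) p"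
    using disabled by (rule eventually_sequentially_Suc[THEN iffD2])
  ultimately show "\<forall>\<^sub>F t in sequentially. \<not> enabled_in A B (Suc n) (synced t) p \<and>
      (mv (\<rho> t) = Some i \<longrightarrow> \<not> enabled_in A B (Suc n) (catching_up t) p)"
    using disabled
    by eventually_elim (use p infinite enabled_synced_iff enabled_catching_up in auto)
qed

lemma copy_process_moves_or_disabled:
  "(\<exists>\<^sub>F u in sequentially. mv (copy_run u) = Some (Suc n)) \<or>
   (\<forall>\<^sub>F u in sequentially. \<not> enabled_in A B (Suc n) (copy_run u) (Suc n))"
proof (cases "\<exists>\<^sub>F t in sequentially. mv (\<rho> t) = Some i")
  case True
  then show ?thesis by (auto intro: frequently_catching_up)
next
  case False
  then have "\<forall>\<^sub>F t in sequentially. mv (\<rho> t) \<noteq> Some i"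
    and "\<forall>\<^sub>F t in sequentially. has_twin n (st (\<rho> t)) i"
    and "\<forall>\<^sub>F t in sequentially. \<not> enabled_in A B n (\<rho> t) i"
    using copyable not_frequently_moves_imp_eventually_disabled[OF i_procs]
    by (simp add: not_frequently, blast+)
  then have "\<forall>\<^sub>F t in sequentially. \<not> enabled_in A B (Suc n) (synced t) (Suc n) \<and>
      (mv (\<rho> t) = Some i \<longrightarrow> \<not> enabled_in A B (Suc n) (catching_up t) (Suc n))"
    by eventually_elim (use enabled_synced_copy_iff in blast)
  then have "\<forall>\<^sub>F u in sequentially. \<not> enabled_in A B (Suc n) (copy_run u) (Suc n)"
    by (rule eventually_copy_run)
  then show ?thesis ..
qed

lemma copy_run_strong_fair: "strong_fair A B (Suc n) copy_run copy_len"
  unfolding strong_fair_iff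
proof (intro conjI ballI)
  show "copy_len = \<infinity>" using infinite by (rule copy_len_infinite)
next
  fix p assume "p \<in> procs (Suc n)"
  then consider "p = Suc n" | "p \<in> procs n" by (auto simp: procs_Suc)
  then show "(\<exists>\<^sub>F u in sequentially. mv (copy_run u) = Some p) \<or>
      (\<forall>\<^sub>F u in sequentially. \<not> enabled_in A B (Suc n) (copy_run u) p)"
  proof cases
    case 1
    then show ?thesis using copy_process_moves_or_disabled by simp
  next
    case 2
    then show ?thesis
      using frequently_copy_run[of "\<lambda>c. mv c = Some p"] copy_run_eventually_disabled by auto
  qed
qed

lemma copy_run_locally_deadlocked:
  assumes "locally_deadlocked A B n \<rho> L"
  shows "locally_deadlocked A B (Suc n) copy_run copy_len"
proof -
  obtain p where p: "p \<in> procs n" and disabled: "\<forall>\<^sub>F t in sequentially. \<not> enabled_in A B n (\<rho> t) p"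
    using assms by (auto simp: locally_deadlocked_iff)
  have "\<not> (\<exists>\<^sub>F t in sequentially. mv (\<rho> t) = Some p)"
  proof
    assume "\<exists>\<^sub>F t in sequentially. mv (\<rho> t) = Some p"
    then have "\<exists>\<^sub>F t in sequentially. enabled_in A B n (\<rho> t) p"
      by (rule frequently_elim1) (simp add: run_moves_enabled[OF run] infinite)
    then show False using disabled by (simp add: frequently_def)
  qed
  then have "\<forall>\<^sub>F u in sequentially. \<not> enabled_in A B (Suc n) (copy_run u) p"
    using copy_run_eventually_disabled[OF p] by blast
  moreover have "copy_len = \<infinity>" using infinite by (rule copy_len_infinite)
  ultimately show ?thesis using p by (auto simp: locally_deadlocked_iff procs_Suc)
qed

end

lemma has_fair_or_finite_deadlock_Suc_of_finite_run:
  assumes run: "is_run A B n \<rho> (enat m)" and i: "i \<in> {1..n}"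
    and twin: "has_twin n (st (\<rho> (m - 1))) i"
  shows "has_fair_or_finite_deadlock A B (Suc n)"
proof -
  interpret process_copy A B n \<rho> "enat m" i
    using run i by unfold_locales
  have "has_twin n (st (\<rho> t)) i" if "enat t < enat m" "mv (\<rho> t) = None" for t
    using run_None_length[OF run that] twin by simp
  then have "is_run A B (Suc n) copy_run copy_len"
    by (rule copy_run_is_run)
  moreover have "copy_len \<noteq> \<infinity>" by (simp add: copy_len_enat)
  ultimately show ?thesis
    unfolding has_fair_or_finite_deadlock_def deadlocked_def globally_deadlocked_def by blast
qed

lemma has_fair_or_finite_deadlock_Suc_of_fair_run:
  assumes "is_run A B n \<rho> \<infinity>" "i \<in> {1..n}" "strong_fair A B n \<rho> \<infinity>"
    and "locally_deadlocked A B n \<rho> \<infinity>"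
    and "(\<exists>\<^sub>F t in sequentially. mv (\<rho> t) = Some i) \<or>
      (\<forall>\<^sub>F t in sequentially. has_twin n (st (\<rho> t)) i)"
  shows "has_fair_or_finite_deadlock A B (Suc n)"
proof -
  interpret fair_process_copy A B n \<rho> \<infinity> i
    using assms by unfold_locales auto
  have "is_run A B (Suc n) copy_run copy_len"
  proof (rule copy_run_is_run)
    fix t assume "mv (\<rho> t) = None"
    then show "has_twin n (st (\<rho> t)) i" using run_infinite_Some[OF assms(1) refl, of t] by simp
  qed
  then show ?thesis
    using copy_run_strong_fair copy_run_locally_deadlocked[OF assms(4)]
    unfolding has_fair_or_finite_deadlock_def deadlocked_def by blast
qed

theorem mainTheorem10:
  fixes A B :: "('q, 'a) template" and n :: nat
  assumes "wf_template A (states A \<union> states B)"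
    and "wf_template B (states A \<union> states B)"
    and "states A \<inter> states B = {}"
    and "alpha A \<inter> alpha B = {}"
    and "n \<ge> card (states B) + 1"
    and "has_fair_or_finite_deadlock A B n"
  shows "has_fair_or_finite_deadlock A B (n + 1)"
proof -
  have fin: "finite (states B)" using assms(2) by (simp add: wf_template_def)
  have card: "card (states B) < n" using assms(5) by simp
  obtain \<rho> L where run: "is_run A B n \<rho> L" and "deadlocked A B n \<rho> L"
    and "strong_fair A B n \<rho> L \<or> L \<noteq> \<infinity>"
    using assms(6) unfolding has_fair_or_finite_deadlock_def by blast
  show ?thesis
  proof (cases L)
    case (enat m)
    then obtain i where "i \<in> {1..n}" "has_twin n (st (\<rho> (m - 1))) i"
      using finite_run_ex_twin[OF _ fin card] run by blast
    then show ?thesis using has_fair_or_finite_deadlock_Suc_of_finite_run run enat by simp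
  next
    case infinity
    then have "strong_fair A B n \<rho> \<infinity>" "locally_deadlocked A B n \<rho> \<infinity>"
      using \<open>deadlocked A B n \<rho> L\<close> \<open>strong_fair A B n \<rho> L \<or> L \<noteq> \<infinity>\<close>
      by (auto simp: deadlocked_def globally_deadlocked_def)
    moreover obtain i where "i \<in> {1..n}" "(\<exists>\<^sub>F t in sequentially. mv (\<rho> t) = Some i) \<or>
        (\<forall>\<^sub>F t in sequentially. has_twin n (st (\<rho> t)) i)"
      using infinite_run_ex_copyable[OF _ fin card] run infinity by blast
    ultimately show ?thesis
      using has_fair_or_finite_deadlock_Suc_of_fair_run run infinity by simp
  qed
qed

end
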